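(* Let $n=2e$ be even and let $\sigma$ be a permutation of $\mathbb{Z}_n$; its cycles $V_1,\dots,V_v$ are disjoint circularly ordered subsets covering $\mathbb{Z}_n$, and we say "$ij\cdots$ is a subset" when $\sigma(i)=j$. Then $V_1,\dots,V_v$ is a vertex set (i.e., $\sigma$ is induced by an orientable planar diagram of the $n$-gon all of whose vertices have degree at least $3$) if and only if the following three conditions hold: (1) each $V_k$ has at least three elements; (2) for no $i\in\mathbb{Z}_n$ is $i(i+1)\cdots$ a subset, i.e. $\sigma(i)\ne i+1$ for all $i$; (3) whenever $ij\cdots$ is a subset, $(j-1)(i+1)\cdots$ is also a subset, i.e. $\sigma(\sigma(i)-1)=i+1$ for all $i$.
   Context: The corners of an $n$-gon are labelled by $i\in\mathbb{Z}_n$ in circular order, and $\bar i$ denotes the edge from corner $i$ to corner $i+1$. An orientable planar diagram is a partition of the $n$ edges into $e=n/2$ unordered pairs $\{\bar i,\bar j\}$ (with $i\ne j$), each pair to be glued in the opposing (orientation-compatible) way; the glueing yields a single-tile tiling of a closed orientable surface. A pair $\{\bar i,\bar j\}$ makes corner $j+1$ adjacent (next in the circular order) to corner $i$ at a vertex, and corner $i+1$ adjacent to corner $j$ at a vertex. Thus, writing $\tau(i)=j$ when $\{\bar i,\bar j\}$ is a pair, the diagram induces the permutation $\sigma(i)=\tau(i)+1$ of $\mathbb{Z}_n$, whose cycles (circularly ordered subsets of corners) are the vertices of the tiling; the degree of a vertex is the size of its cycle. A vertex set is the collection of cycles induced in this way by a planar diagram all of whose vertices have degree at least $3$. *)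

theory Defs
  imports "HOL-Combinatorics.Permutations"
begin

text \<open>Corners of the n-gon are 0..<n, read as Z_n (arithmetic mod n).
 Edge i goes from corner i to corner i+1 (mod n).
 An orientable planar diagram is encoded by the pairing tau: tau i = j iff {i,j} is a pair;
 so tau is a fixed-point-free involution of {0..<n}.\<close>

definition planar_diagram :: "nat \<Rightarrow> (nat \<Rightarrow> nat) \<Rightarrow> bool" where
  "planar_diagram n \<tau> \<longleftrightarrow>
     (\<forall>i<n. \<tau> i < n \<and> \<tau> i \<noteq> i \<and> \<tau> (\<tau> i) = i)"

definition induced_perm :: "nat \<Rightarrow> (nat \<Rightarrow> nat) \<Rightarrow> nat \<Rightarrow> nat" where
  "induced_perm n \<tau> i = (\<tau> i + 1) mod n"

definition cycle_of :: "(nat \<Rightarrow> nat) \<Rightarrow> nat \<Rightarrow> nat set" where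
  "cycle_of \<sigma> i = {(\<sigma> ^^ k) i | k. True}"

definition is_vertex_set :: "nat \<Rightarrow> (nat \<Rightarrow> nat) \<Rightarrow> bool" where
  "is_vertex_set n \<sigma> \<longleftrightarrow>
     (\<exists>\<tau>. planar_diagram n \<tau> \<and> (\<forall>i<n. \<sigma> i = induced_perm n \<tau> i)
          \<and> (\<forall>i<n. card (cycle_of \<sigma> i) \<ge> 3))"

end

theory Submission
  imports Defs
begin

text \<open>Writing \<open>\<sigma> = \<tau> + 1\<close> in \<open>\<int>\<^sub>n\<close>, the pairing is recovered as \<open>\<tau> = \<sigma> - 1\<close>.
  Then \<open>\<tau>\<close> has no fixed point iff \<open>\<sigma> i \<noteq> i + 1\<close>, and \<open>\<tau>\<close> is an involution iff
  \<open>\<sigma> (\<sigma> i - 1) = i + 1\<close>; the degree condition is the same on both sides.\<close>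

lemma mod_pred_succ: "(a::nat) < n \<Longrightarrow> ((a + n - 1) mod n + 1) mod n = a"
  by (cases a) (auto simp: mod_if)

lemma mod_succ_pred: "(a::nat) < n \<Longrightarrow> ((a + 1) mod n + n - 1) mod n = a"
  by (cases "a + 1 = n") auto

definition pairing_of_perm :: "nat \<Rightarrow> (nat \<Rightarrow> nat) \<Rightarrow> nat \<Rightarrow> nat" where
  "pairing_of_perm n \<sigma> i = (\<sigma> i + n - 1) mod n"

lemma pairing_of_induced_perm:
  assumes "planar_diagram n \<tau>" and "i < n"
  shows "pairing_of_perm n (induced_perm n \<tau>) i = \<tau> i"
  using assms mod_succ_pred
  unfolding planar_diagram_def pairing_of_perm_def induced_perm_def by simp

lemma induced_perm_pairing_of_perm:
  assumes "\<sigma> i < n"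
  shows "induced_perm n (pairing_of_perm n \<sigma>) i = \<sigma> i"
  using mod_pred_succ[OF assms] unfolding induced_perm_def pairing_of_perm_def .

lemma induced_perm_neq_succ:
  assumes "planar_diagram n \<tau>" and "i < n"
  shows "induced_perm n \<tau> i \<noteq> (i + 1) mod n"
proof
  assume "induced_perm n \<tau> i = (i + 1) mod n"
  then have "pairing_of_perm n (induced_perm n \<tau>) i = i"
    using mod_succ_pred[OF \<open>i < n\<close>] unfolding pairing_of_perm_def by simp
  with pairing_of_induced_perm[OF assms] have "\<tau> i = i" by simp
  with assms show False unfolding planar_diagram_def by blast
qed

lemma induced_perm_pairing:
  assumes "planar_diagram n \<tau>" and "i < n"
  shows "induced_perm n \<tau> (\<tau> i) = (i + 1) mod n"
  using assms unfolding planar_diagram_def induced_perm_def by simp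

lemma planar_diagram_pairing_of_perm:
  assumes range: "\<And>i. i < n \<Longrightarrow> \<sigma> i < n"
    and no_succ: "\<And>i. i < n \<Longrightarrow> \<sigma> i \<noteq> (i + 1) mod n"
    and pred_closed: "\<And>i. i < n \<Longrightarrow> \<sigma> ((\<sigma> i + n - 1) mod n) = (i + 1) mod n"
  shows "planar_diagram n (pairing_of_perm n \<sigma>)"
  unfolding planar_diagram_def
proof (intro allI impI conjI)
  fix i assume "i < n"
  show "pairing_of_perm n \<sigma> i < n"
    using \<open>i < n\<close> unfolding pairing_of_perm_def by simp
  show "pairing_of_perm n \<sigma> (pairing_of_perm n \<sigma> i) = i"
    using pred_closed[OF \<open>i < n\<close>] mod_succ_pred[OF \<open>i < n\<close>]
    unfolding pairing_of_perm_def by simp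
  show "pairing_of_perm n \<sigma> i \<noteq> i"
    using induced_perm_pairing_of_perm[of \<sigma> i n, OF range[OF \<open>i < n\<close>]] no_succ[OF \<open>i < n\<close>]
    unfolding induced_perm_def by auto
qed

lemma induced_by_planar_diagram_iff:
  assumes "\<And>i. i < n \<Longrightarrow> \<sigma> i < n"
  shows "(\<exists>\<tau>. planar_diagram n \<tau> \<and> (\<forall>i<n. \<sigma> i = induced_perm n \<tau> i)) \<longleftrightarrow>
           (\<forall>i<n. \<sigma> i \<noteq> (i + 1) mod n)
         \<and> (\<forall>i<n. \<sigma> ((\<sigma> i + n - 1) mod n) = (i + 1) mod n)"
proof
  assume "\<exists>\<tau>. planar_diagram n \<tau> \<and> (\<forall>i<n. \<sigma> i = induced_perm n \<tau> i)"
  then obtain \<tau> where \<tau>: "planar_diagram n \<tau>" and \<sigma>: "\<forall>i<n. \<sigma> i = induced_perm n \<tau> i"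
    by blast
  have "\<sigma> i \<noteq> (i + 1) mod n" if "i < n" for i
    using induced_perm_neq_succ[OF \<tau> that] \<sigma> that by simp
  moreover have "\<sigma> ((\<sigma> i + n - 1) mod n) = (i + 1) mod n" if "i < n" for i
  proof -
    have "(\<sigma> i + n - 1) mod n = \<tau> i"
      using pairing_of_induced_perm[OF \<tau> that] \<sigma> that unfolding pairing_of_perm_def by simp
    moreover have "\<tau> i < n"
      using \<tau> that unfolding planar_diagram_def by blast
    ultimately show ?thesis
      using induced_perm_pairing[OF \<tau> that] \<sigma> by simp
  qed
  ultimately show "(\<forall>i<n. \<sigma> i \<noteq> (i + 1) mod n)
           \<and> (\<forall>i<n. \<sigma> ((\<sigma> i + n - 1) mod n) = (i + 1) mod n)"
    by blast
next
  assume "(\<forall>i<n. \<sigma> i \<noteq> (i + 1) mod n)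
        \<and> (\<forall>i<n. \<sigma> ((\<sigma> i + n - 1) mod n) = (i + 1) mod n)"
  then have "planar_diagram n (pairing_of_perm n \<sigma>)"
    using planar_diagram_pairing_of_perm[of n \<sigma>] assms by blast
  moreover have "\<forall>i<n. \<sigma> i = induced_perm n (pairing_of_perm n \<sigma>) i"
    using induced_perm_pairing_of_perm[of \<sigma> _ n] assms by simp
  ultimately show "\<exists>\<tau>. planar_diagram n \<tau> \<and> (\<forall>i<n. \<sigma> i = induced_perm n \<tau> i)"
    by blast
qed

theorem proposition2p1:
  fixes n e :: nat and \<sigma> :: "nat \<Rightarrow> nat"
  assumes "n = 2 * e"
    and "\<sigma> permutes {0..<n}"
  shows "is_vertex_set n \<sigma> \<longleftrightarrow>
           ((\<forall>i<n. card (cycle_of \<sigma> i) \<ge> 3)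
          \<and> (\<forall>i<n. \<sigma> i \<noteq> (i + 1) mod n)
          \<and> (\<forall>i<n. \<sigma> ((\<sigma> i + n - 1) mod n) = (i + 1) mod n))"
proof -
  have "\<sigma> i < n" if "i < n" for i
    using permutes_in_image[OF assms(2)] that by simp
  then have "(\<exists>\<tau>. planar_diagram n \<tau> \<and> (\<forall>i<n. \<sigma> i = induced_perm n \<tau> i)) \<longleftrightarrow>
      (\<forall>i<n. \<sigma> i \<noteq> (i + 1) mod n) \<and> (\<forall>i<n. \<sigma> ((\<sigma> i + n - 1) mod n) = (i + 1) mod n)"
    by (rule induced_by_planar_diagram_iff)
  moreover have "is_vertex_set n \<sigma> \<longleftrightarrow>
      (\<exists>\<tau>. planar_diagram n \<tau> \<and> (\<forall>i<n. \<sigma> i = induced_perm n \<tau> i))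
      \<and> (\<forall>i<n. card (cycle_of \<sigma> i) \<ge> 3)"
    unfolding is_vertex_set_def by blast
  ultimately show ?thesis by blast
qed

end
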